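(* Let $\mathbf{A}=(\mathcal{P},\mathcal{L},\parallel)$ be an affine space over $\mathrm{GF}(2)$ of countably infinite dimension, and let $\mathbf{A}'=(\mathcal{P}',\mathcal{L}',\parallel')$ be an $m$-dimensional affine space, $3\le m\le\aleph_0$, over a countably infinite (skew) field $F'$ of arbitrary characteristic. Then there exists a bijection $\varphi:\mathcal{L}\to\mathcal{L}'$ satisfying $a\sim b\implies a^\varphi\sim' b^\varphi$ for all $a,b\in\mathcal{L}$ such that the associated injection $\lambda:\mathcal{P}\to\mathcal{P}'$, $a\cap b\mapsto a^\varphi\cap b^\varphi$ ($a,b\in\mathcal{L}$ adjacent), is not surjective; indeed, $\varphi$ can be chosen so that there is a set $\mathcal{B}'\subseteq\mathcal{P}'$ containing no three collinear points and meeting every line of $\mathbf{A}'$ in exactly two points, with $\lambda(\mathcal{P})=\mathcal{B}'$.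
   Context: In an affine space, lines $a,b$ are related, $a\sim b$, if $a\cap b\ne\emptyset$, and adjacent if related and distinct; analogously $\sim'$ in $\mathbf{A}'$. In an affine space over $\mathrm{GF}(2)$ every line consists of exactly two points, so lines of $\mathbf{A}$ are exactly the 2-subsets of $\mathcal{P}$. *)

theory Defs
  imports Main "HOL-Library.Z2" "HOL-Library.Countable_Set"
begin

text \<open>Coordinate model of the affine space of dimension |I| over a (skew) field F
  (left vector space): points are finitely supported functions I \<rightarrow> F
  (zero outside I); lines are the sets p + F v with v a nonzero vector.\<close>

definition aff_points :: "'i set \<Rightarrow> ('i \<Rightarrow> 'f::division_ring) set" where
  "aff_points I = {x. finite {i. x i \<noteq> 0} \<and> (\<forall>i. i \<notin> I \<longrightarrow> x i = 0)}"

definition aff_line :: "('i \<Rightarrow> 'f::division_ring) \<Rightarrow> ('i \<Rightarrow> 'f) \<Rightarrow> ('i \<Rightarrow> 'f) set" where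
  "aff_line p v = {(\<lambda>i. p i + t * v i) | t. True}"

definition aff_lines :: "'i set \<Rightarrow> ('i \<Rightarrow> 'f::division_ring) set set" where
  "aff_lines I = {aff_line p v | p v. p \<in> aff_points I \<and> v \<in> aff_points I \<and> v \<noteq> (\<lambda>_. 0)}"

end

theory Submission
  imports Defs
begin

text \<open>The lines of the affine space over GF(2) are exactly the 2-subsets of its point set.
  So it suffices to find a set \<open>B'\<close> of points of \<open>A'\<close> meeting every line in exactly two
  points, together with a bijection \<open>\<lambda>\<close> from the points of \<open>A\<close> onto \<open>B'\<close>: then \<open>\<phi>\<close> sends the
  line \<open>{p, q}\<close> to the unique line of \<open>A'\<close> through \<open>\<lambda> p\<close> and \<open>\<lambda> q\<close>, and it is bijective
  because every line of \<open>A'\<close> meets \<open>B'\<close> in a 2-subset. Such a \<open>B'\<close> exists since \<open>A'\<close> has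
  countably many lines, each of them infinite: enumerate the lines and grow a finite set with no
  three collinear points until it meets the current line twice. A finite such set has only
  finitely many secants, each meeting another line in at most one point, so every line has
  room for a new point. \<open>B'\<close> is countably infinite, and it is not the whole point set since it
  contains no line.\<close>

locale linear_space =
  fixes P :: "'a set" and L :: "'a set set"
  assumes line_subset: "l \<in> L \<Longrightarrow> l \<subseteq> P"
    and line_through: "\<lbrakk>x \<in> P; y \<in> P; x \<noteq> y\<rbrakk> \<Longrightarrow> \<exists>l\<in>L. x \<in> l \<and> y \<in> l"
    and line_unique: "\<lbrakk>l \<in> L; m \<in> L; x \<noteq> y; x \<in> l; y \<in> l; x \<in> m; y \<in> m\<rbrakk> \<Longrightarrow> l = m"
begin

lemma lines_inter_subsingleton:
  assumes "l \<in> L" "m \<in> L" "l \<noteq> m"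
  shows "\<exists>x. l \<inter> m \<subseteq> {x}"
  using line_unique[OF assms(1,2)] assms(3) by blast

lemma lines_meet_at:
  assumes "l \<in> L" "m \<in> L" "l \<noteq> m" "x \<in> l" "x \<in> m"
  shows "l \<inter> m = {x}"
  using line_unique[OF assms(1,2)] assms(3-) by blast

lemma line_eq_if_secant_eq:
  assumes "l \<in> L" "m \<in> L" "card (B \<inter> l) = 2" "B \<inter> l = B \<inter> m"
  shows "l = m"
proof -
  obtain x y where "x \<noteq> y" "B \<inter> l = {x, y}" using assms(3) by (auto simp: card_2_iff)
  then show ?thesis using line_unique[OF assms(1,2)] assms(4) by blast
qed

lemma finite_secants:
  assumes "finite B"
  shows "finite {l \<in> L. card (B \<inter> l) = 2}"
proof (rule finite_imageD)
  show "inj_on (\<lambda>l. B \<inter> l) {l \<in> L. card (B \<inter> l) = 2}"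
  proof (rule inj_onI)
    fix l m assume "l \<in> {l \<in> L. card (B \<inter> l) = 2}" "m \<in> {l \<in> L. card (B \<inter> l) = 2}"
      and "B \<inter> l = B \<inter> m"
    then show "l = m" by (intro line_eq_if_secant_eq[of l m B]) simp_all
  qed
  have "(\<lambda>l. B \<inter> l) ` {l \<in> L. card (B \<inter> l) = 2} \<subseteq> Pow B" by blast
  then show "finite ((\<lambda>l. B \<inter> l) ` {l \<in> L. card (B \<inter> l) = 2})"
    using assms by (simp add: finite_subset)
qed

definition finite_cap :: "'a set \<Rightarrow> bool" where
  "finite_cap B \<longleftrightarrow> finite B \<and> B \<subseteq> P \<and> (\<forall>l\<in>L. card (B \<inter> l) \<le> 2)"

lemma finite_cap_insert:
  assumes B: "finite_cap B" and l: "l \<in> L" "infinite l" "card (B \<inter> l) < 2"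
  shows "\<exists>x \<in> l - B. finite_cap (insert x B)"
proof -
  have fin: "finite B" and B2: "\<And>m. m \<in> L \<Longrightarrow> card (B \<inter> m) \<le> 2"
    using B by (auto simp: finite_cap_def)
  define blocked where "blocked = (\<Union>m \<in> {m \<in> L. card (B \<inter> m) = 2} - {l}. m \<inter> l)"
  have "finite blocked" unfolding blocked_def
  proof (rule finite_UN_I)
    show "finite ({m \<in> L. card (B \<inter> m) = 2} - {l})" using finite_secants[OF fin] by simp
    show "finite (m \<inter> l)" if m: "m \<in> {m \<in> L. card (B \<inter> m) = 2} - {l}" for m
    proof -
      obtain z where "m \<inter> l \<subseteq> {z}" using lines_inter_subsingleton[of m l] m l(1) by blast
      then show ?thesis by (rule finite_subset) simp
    qed
  qed
  then have "infinite (l - (B \<union> blocked))" using l(2) fin by simp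
  then obtain x where x: "x \<in> l" "x \<notin> B" "x \<notin> blocked"
    using infinite_imp_nonempty by blast
  have "card (insert x B \<inter> m) \<le> 2" if m: "m \<in> L" for m
  proof (cases "x \<in> m")
    case True
    have "card (B \<inter> m) \<noteq> 2"
    proof
      assume c: "card (B \<inter> m) = 2"
      then have "m \<noteq> l" using l(3) by auto
      then have "x \<in> blocked" unfolding blocked_def using m c True x(1) by blast
      then show False using x(3) by blast
    qed
    then have "card (B \<inter> m) \<le> 1" using B2[OF m] by linarith
    moreover have "insert x B \<inter> m = insert x (B \<inter> m)" using True by blast
    ultimately show ?thesis using fin x(2) by simp
  next
    case False
    then have "insert x B \<inter> m = B \<inter> m" by blast
    then show ?thesis using B2[OF m] by simp
  qed
  moreover have "insert x B \<subseteq> P" using B x(1) line_subset[OF l(1)] by (auto simp: finite_cap_def)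
  ultimately have "finite_cap (insert x B)" using fin by (simp add: finite_cap_def)
  then show ?thesis using x by blast
qed

lemma finite_cap_extend_to_secant:
  assumes "finite_cap B" "l \<in> L" "infinite l"
  shows "\<exists>B'. finite_cap B' \<and> B \<subseteq> B' \<and> card (B' \<inter> l) = 2"
  using assms(1)
proof (induction "2 - card (B \<inter> l)" arbitrary: B)
  case 0
  then have "card (B \<inter> l) = 2" using assms(2) by (simp add: finite_cap_def le_antisym)
  then show ?case using 0 by blast
next
  case (Suc k)
  then have "card (B \<inter> l) < 2" by linarith
  then obtain x where x: "x \<in> l - B" "finite_cap (insert x B)"
    using finite_cap_insert Suc.prems assms(2,3) by blast
  have "card (insert x B \<inter> l) = Suc (card (B \<inter> l))"
    using x Suc.prems by (simp add: finite_cap_def)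
  then have "k = 2 - card (insert x B \<inter> l)" using Suc.hyps(2) by simp
  from Suc.hyps(1)[OF this x(2)] show ?case by blast
qed

definition two_set :: "'a set \<Rightarrow> bool" where
  "two_set B \<longleftrightarrow> B \<subseteq> P \<and> (\<forall>l\<in>L. card (B \<inter> l) = 2)"

lemma exists_two_set:
  assumes "countable L" and infinite_lines: "\<And>l. l \<in> L \<Longrightarrow> infinite l"
  shows "\<exists>B. two_set B"
proof (cases "L = {}")
  case True
  then have "two_set {}" unfolding two_set_def by simp
  then show ?thesis by blast
next
  case False
  let ?line = "from_nat_into L"
  have "\<exists>f. \<forall>n. finite_cap (f n) \<and> f n \<subseteq> f (Suc n) \<and> card (f (Suc n) \<inter> ?line n) = 2"
  proof (rule dependent_nat_choice)
    show "\<exists>B. finite_cap B" by (rule exI[of _ "{}"]) (simp add: finite_cap_def)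
    show "\<exists>B'. finite_cap B' \<and> B \<subseteq> B' \<and> card (B' \<inter> ?line n) = 2" if "finite_cap B" for B n
      using finite_cap_extend_to_secant[OF that from_nat_into[OF False] infinite_lines[OF from_nat_into[OF False]]] .
  qed
  then obtain f where f: "\<forall>n. finite_cap (f n) \<and> f n \<subseteq> f (Suc n) \<and> card (f (Suc n) \<inter> ?line n) = 2"
    by blast
  then have cap: "\<And>n. finite_cap (f n)" and step: "\<And>n. f n \<subseteq> f (Suc n)"
    and secant: "\<And>n. card (f (Suc n) \<inter> ?line n) = 2" by simp_all
  define B where "B = (\<Union>n. f n)"
  have stable: "B \<inter> ?line n = f (Suc n) \<inter> ?line n" for n
  proof
    show "B \<inter> ?line n \<subseteq> f (Suc n) \<inter> ?line n"
    proof
      fix x assume x: "x \<in> B \<inter> ?line n"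
      then obtain k where "x \<in> f k" by (auto simp: B_def)
      define M where "M = max k (Suc n)"
      have "f (Suc n) \<inter> ?line n \<subseteq> f M \<inter> ?line n"
        using lift_Suc_mono_le[of f, OF step, of "Suc n" M] by (auto simp: M_def)
      moreover have "finite (f M \<inter> ?line n)" "card (f M \<inter> ?line n) \<le> 2"
        using cap[of M] from_nat_into[OF False] by (auto simp: finite_cap_def)
      ultimately have "f (Suc n) \<inter> ?line n = f M \<inter> ?line n"
        by (intro card_seteq) (simp_all add: secant)
      moreover have "x \<in> f M" using \<open>x \<in> f k\<close> lift_Suc_mono_le[of f, OF step, of k M] by (auto simp: M_def)
      ultimately show "x \<in> f (Suc n) \<inter> ?line n" using x by blast
    qed
  qed (auto simp: B_def)
  have "B \<subseteq> P" using cap by (auto simp: B_def finite_cap_def)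
  moreover have "card (B \<inter> l) = 2" if l: "l \<in> L" for l
  proof -
    obtain n where "l = ?line n" using from_nat_into_surj[OF assms(1) l] by metis
    then show ?thesis using stable[of n] secant[of n] by simp
  qed
  ultimately show ?thesis by (auto simp: two_set_def)
qed

lemma two_set_secants_bij:
  assumes "two_set B"
  shows "bij_betw (\<lambda>l. B \<inter> l) L {a. a \<subseteq> B \<and> card a = 2}"
proof (rule bij_betw_imageI)
  show "inj_on (\<lambda>l. B \<inter> l) L"
  proof (rule inj_onI)
    fix l m assume "l \<in> L" "m \<in> L" "B \<inter> l = B \<inter> m"
    then show "l = m" using assms by (intro line_eq_if_secant_eq[of l m B]) (simp_all add: two_set_def)
  qed
  show "(\<lambda>l. B \<inter> l) ` L = {a. a \<subseteq> B \<and> card a = 2}"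
  proof
    show "(\<lambda>l. B \<inter> l) ` L \<subseteq> {a. a \<subseteq> B \<and> card a = 2}" using assms by (auto simp: two_set_def)
    show "{a. a \<subseteq> B \<and> card a = 2} \<subseteq> (\<lambda>l. B \<inter> l) ` L"
    proof
      fix a assume "a \<in> {a. a \<subseteq> B \<and> card a = 2}"
      then obtain x y where a: "a = {x, y}" "x \<noteq> y" "a \<subseteq> B" by (auto simp: card_2_iff)
      moreover have "x \<in> P" "y \<in> P" using a assms by (auto simp: two_set_def)
      ultimately obtain l where l: "l \<in> L" "x \<in> l" "y \<in> l" using line_through by blast
      then have "a \<subseteq> B \<inter> l" "card (B \<inter> l) = 2" "card a = 2"
        using a assms by (auto simp: two_set_def)
      then have "a = B \<inter> l" by (intro card_seteq) (simp_all add: card_ge_0_finite)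
      then show "a \<in> (\<lambda>l. B \<inter> l) ` L" using l by blast
    qed
  qed
qed

lemma two_set_infinite:
  assumes "two_set B" "infinite L"
  shows "infinite B"
proof
  assume "finite B"
  then have "finite {a. a \<subseteq> B \<and> card a = 2}" by simp
  then show False using bij_betw_finite[OF two_set_secants_bij[OF assms(1)]] assms(2) by blast
qed

lemma two_set_countable:
  assumes "two_set B" "countable L" "infinite L"
  shows "countable B"
proof -
  let ?pairs = "{a. a \<subseteq> B \<and> card a = 2}"
  have "countable ?pairs" using countableI_bij1[OF two_set_secants_bij[OF assms(1)] assms(2)] .
  then have "countable (\<Union>a\<in>?pairs. a)"
    by (rule countable_UN) (simp add: countable_finite card_ge_0_finite)
  moreover have "B \<subseteq> (\<Union>a\<in>?pairs. a)"
  proof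
    fix x assume "x \<in> B"
    have "infinite (B - {x})" using two_set_infinite[OF assms(1,3)] by simp
    then obtain y where "y \<in> B" "y \<noteq> x" using infinite_imp_nonempty by blast
    with \<open>x \<in> B\<close> show "x \<in> (\<Union>a\<in>?pairs. a)" by (intro UN_I[of "{x, y}"]) auto
  qed
  ultimately show ?thesis by (rule countable_subset[rotated])
qed

lemma two_set_no_three_collinear:
  assumes "two_set B" "l \<in> L"
  shows "\<not> (\<exists>x y z. x \<in> B \<inter> l \<and> y \<in> B \<inter> l \<and> z \<in> B \<inter> l \<and> x \<noteq> y \<and> y \<noteq> z \<and> x \<noteq> z)"
proof -
  obtain u v where "B \<inter> l = {u, v}" using assms by (auto simp: two_set_def card_2_iff)
  then show ?thesis by (metis insert_iff singletonD)
qed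

lemma two_set_ne_points:
  assumes "two_set B" "l \<in> L" "infinite l"
  shows "B \<noteq> P"
proof
  assume "B = P"
  then have "B \<inter> l = l" using line_subset[OF assms(2)] by blast
  then show False using assms by (auto simp: two_set_def)
qed

end

lemma bij_betw_image_card_subsets:
  assumes "bij_betw f A B"
  shows "bij_betw (image f) {a. a \<subseteq> A \<and> card a = k} {b. b \<subseteq> B \<and> card b = k}"
proof (rule bij_betw_subset[OF bij_betw_Pow[OF assms]])
  have inj: "inj_on f A" and img: "f ` A = B" using assms by (auto simp: bij_betw_def)
  show "image f ` {a. a \<subseteq> A \<and> card a = k} = {b. b \<subseteq> B \<and> card b = k}"
  proof
    show "image f ` {a. a \<subseteq> A \<and> card a = k} \<subseteq> {b. b \<subseteq> B \<and> card b = k}"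
      using inj img by (auto simp: card_image inj_on_subset)
    show "{b. b \<subseteq> B \<and> card b = k} \<subseteq> image f ` {a. a \<subseteq> A \<and> card a = k}"
    proof
      fix b assume b: "b \<in> {b. b \<subseteq> B \<and> card b = k}"
      then have "f ` (inv_into A f ` b) = b" by (intro image_inv_into_cancel[OF img]) simp
      moreover have "inv_into A f ` b \<subseteq> A" using b img by (auto intro: inv_into_into)
      moreover have "card (inv_into A f ` b) = k"
        using b img by (simp add: card_image inj_on_inv_into)
      ultimately show "b \<in> image f ` {a. a \<subseteq> A \<and> card a = k}" by blast
    qed
  qed
qed auto

lemma embedding_onto_two_set:
  fixes P :: "'a set" and P' :: "'b set"
  assumes L: "L = {a. a \<subseteq> P \<and> card a = 2}" and "countable P" "infinite P"
    and "linear_space P' L'" "countable L'" "infinite L'" "\<And>l. l \<in> L' \<Longrightarrow> infinite l"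
  shows "\<exists>\<phi> lam B'. bij_betw \<phi> L L' \<and>
     (\<forall>a \<in> L. \<forall>b \<in> L. a \<inter> b \<noteq> {} \<longrightarrow> \<phi> a \<inter> \<phi> b \<noteq> {}) \<and>
     (\<forall>a \<in> L. \<forall>b \<in> L. \<forall>p. a \<noteq> b \<and> p \<in> a \<and> p \<in> b \<longrightarrow> \<phi> a \<inter> \<phi> b = {lam p}) \<and>
     inj_on lam P \<and> lam ` P \<noteq> P' \<and> B' \<subseteq> P' \<and>
     (\<forall>l \<in> L'. \<not> (\<exists>x y z. x \<in> B' \<inter> l \<and> y \<in> B' \<inter> l \<and> z \<in> B' \<inter> l \<and>
                                  x \<noteq> y \<and> y \<noteq> z \<and> x \<noteq> z)) \<and>
     (\<forall>l \<in> L'. card (B' \<inter> l) = 2) \<and> lam ` P = B'"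
proof -
  interpret A': linear_space P' L' by fact
  obtain B where B: "A'.two_set B" using A'.exists_two_set assms(5,7) by blast
  then have BP': "B \<subseteq> P'" and B2: "\<And>l. l \<in> L' \<Longrightarrow> card (B \<inter> l) = 2"
    by (auto simp: A'.two_set_def)
  have "countable B" "infinite B"
    using A'.two_set_countable A'.two_set_infinite B assms(5,6) by auto
  then obtain g where g: "bij_betw g P B"
    using bij_betw_trans[OF to_nat_on_infinite bij_betw_from_nat_into] assms(2,3) by blast
  define \<phi> where "\<phi> a = the_inv_into L' (\<lambda>l. B \<inter> l) (g ` a)" for a
  have secants: "bij_betw (\<lambda>l. B \<inter> l) L' {a. a \<subseteq> B \<and> card a = 2}"
    using A'.two_set_secants_bij[OF B] .
  have \<phi>_bij: "bij_betw \<phi> L L'"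
    unfolding \<phi>_def L using bij_betw_trans[OF bij_betw_image_card_subsets[OF g] bij_betw_the_inv_into[OF secants]]
    by (simp add: comp_def)
  have B\<phi>: "B \<inter> \<phi> a = g ` a" if "a \<in> L" for a
    unfolding \<phi>_def using that bij_betw_image_card_subsets[OF g, of 2] secants g
    by (intro f_the_inv_into_f) (auto simp: bij_betw_def L)
  have on_image: "g p \<in> \<phi> a" if "a \<in> L" "p \<in> a" for a p
    using B\<phi>[OF that(1)] that(2) by blast
  have \<phi>L': "\<phi> a \<in> L'" if "a \<in> L" for a
    using \<phi>_bij that by (auto simp: bij_betw_def)
  have "\<forall>a\<in>L. \<forall>b\<in>L. a \<inter> b \<noteq> {} \<longrightarrow> \<phi> a \<inter> \<phi> b \<noteq> {}"
    using on_image by blast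
  moreover have "\<forall>a\<in>L. \<forall>b\<in>L. \<forall>p. a \<noteq> b \<and> p \<in> a \<and> p \<in> b \<longrightarrow> \<phi> a \<inter> \<phi> b = {g p}"
  proof (intro ballI allI impI, elim conjE)
    fix a b p assume ab: "a \<in> L" "b \<in> L" "a \<noteq> b" and p: "p \<in> a" "p \<in> b"
    then have "\<phi> a \<noteq> \<phi> b" using inj_onD[OF bij_betw_imp_inj_on[OF \<phi>_bij]] by blast
    then show "\<phi> a \<inter> \<phi> b = {g p}"
      using A'.lines_meet_at \<phi>L' on_image ab p by blast
  qed
  moreover have "g ` P \<noteq> P'"
  proof -
    obtain l where "l \<in> L'" using assms(6) by fastforce
    then show ?thesis using A'.two_set_ne_points[OF B] g assms(7) by (simp add: bij_betw_def)
  qed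
  moreover have "\<forall>l\<in>L'. \<not> (\<exists>x y z. x \<in> B \<inter> l \<and> y \<in> B \<inter> l \<and> z \<in> B \<inter> l \<and>
                                  x \<noteq> y \<and> y \<noteq> z \<and> x \<noteq> z)"
    using A'.two_set_no_three_collinear[OF B] by blast
  moreover have "inj_on g P" "g ` P = B" using g by (auto simp: bij_betw_def)
  ultimately show ?thesis
    using \<phi>_bij BP' B2 by (intro exI[of _ \<phi>] exI[of _ g] exI[of _ B]) auto
qed

lemma aff_points_add_scaled:
  assumes "p \<in> aff_points I" "v \<in> aff_points I"
  shows "(\<lambda>i. p i + t * v i) \<in> aff_points I"
proof -
  have "{i. p i + t * v i \<noteq> 0} \<subseteq> {i. p i \<noteq> 0} \<union> {i. v i \<noteq> 0}" by auto
  then show ?thesis using assms by (auto simp: aff_points_def intro: finite_subset)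
qed

lemma aff_line_subset_points:
  "p \<in> aff_points I \<Longrightarrow> v \<in> aff_points I \<Longrightarrow> aff_line p v \<subseteq> aff_points I"
  by (auto simp: aff_line_def intro: aff_points_add_scaled)

lemma aff_line_through_in_aff_lines:
  fixes x y :: "'i \<Rightarrow> 'f::division_ring"
  assumes "x \<in> aff_points I" "y \<in> aff_points I" "x \<noteq> y"
  shows "aff_line x (\<lambda>i. y i - x i) \<in> aff_lines I"
proof -
  have "(\<lambda>i. y i + (- 1) * x i) \<in> aff_points I" using assms by (intro aff_points_add_scaled)
  moreover have "(\<lambda>i. y i - x i) \<noteq> (\<lambda>_. 0)" using assms(3) by (metis ext right_minus_eq)
  ultimately show ?thesis using assms(1) by (auto simp: aff_lines_def)
qed

lemma aff_line_through_contains: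
  fixes x y :: "'i \<Rightarrow> 'f::division_ring"
  shows "x \<in> aff_line x (\<lambda>i. y i - x i)" "y \<in> aff_line x (\<lambda>i. y i - x i)"
  unfolding aff_line_def by (rule CollectI, rule exI[of _ 0], simp) (rule CollectI, rule exI[of _ 1], simp)

lemma aff_line_eq_through:
  fixes p v :: "'i \<Rightarrow> 'f::division_ring"
  assumes "x \<in> aff_line p v" "y \<in> aff_line p v" "x \<noteq> y"
  shows "aff_line p v = aff_line x (\<lambda>i. y i - x i)"
proof -
  obtain s where s: "x = (\<lambda>i. p i + s * v i)" using assms(1) by (auto simp: aff_line_def)
  obtain t where t: "y = (\<lambda>i. p i + t * v i)" using assms(2) by (auto simp: aff_line_def)
  have "t - s \<noteq> 0" using s t assms(3) by auto
  have d: "y i - x i = (t - s) * v i" for i by (simp add: s t left_diff_distrib)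
  have "p i + u * v i = x i + ((u - s) * inverse (t - s)) * (y i - x i)" for u i
  proof -
    have "((u - s) * inverse (t - s)) * ((t - s) * v i) = (u - s) * v i"
      using \<open>t - s \<noteq> 0\<close> by (simp add: mult.assoc[symmetric]) (simp add: mult.assoc)
    then have "x i + ((u - s) * inverse (t - s)) * (y i - x i) = x i + (u - s) * v i"
      by (simp only: d)
    then show ?thesis by (simp add: s algebra_simps)
  qed
  moreover have "x i + r * (y i - x i) = p i + (s + r * (t - s)) * v i" for r i
    unfolding d by (simp add: s distrib_right mult.assoc)
  ultimately show ?thesis unfolding aff_line_def by blast
qed

lemma aff_line_eq_through_if_mem_aff_lines:
  assumes "l \<in> aff_lines I" "x \<in> l" "y \<in> l" "x \<noteq> y"
  shows "l = aff_line x (\<lambda>i. y i - x i)"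
proof -
  obtain p v where l: "l = aff_line p v" using assms(1) by (auto simp: aff_lines_def)
  have "aff_line p v = aff_line x (\<lambda>i. y i - x i)"
    using assms(2-4) unfolding l by (rule aff_line_eq_through)
  then show ?thesis using l by simp
qed

lemma aff_linear_space:
  "linear_space (aff_points I) (aff_lines I :: ('i \<Rightarrow> 'f::division_ring) set set)"
proof
  fix l m :: "('i \<Rightarrow> 'f) set" and x y :: "'i \<Rightarrow> 'f"
  show "l \<subseteq> aff_points I" if l: "l \<in> aff_lines I"
  proof -
    obtain p v where "l = aff_line p v" "p \<in> aff_points I" "v \<in> aff_points I"
      using l by (auto simp: aff_lines_def)
    then show ?thesis by (simp add: aff_line_subset_points)
  qed
  show "\<exists>l\<in>aff_lines I. x \<in> l \<and> y \<in> l" if "x \<in> aff_points I" "y \<in> aff_points I" "x \<noteq> y"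
    by (intro bexI[OF _ aff_line_through_in_aff_lines[OF that]] conjI aff_line_through_contains)
  show "l = m" if "l \<in> aff_lines I" "m \<in> aff_lines I" "x \<noteq> y" "x \<in> l" "y \<in> l" "x \<in> m" "y \<in> m"
    using aff_line_eq_through_if_mem_aff_lines[OF that(1,4,5,3)]
      aff_line_eq_through_if_mem_aff_lines[OF that(2,6,7,3)] by simp
qed

lemma infinite_aff_line:
  fixes l :: "('i \<Rightarrow> 'f::division_ring) set"
  assumes "l \<in> aff_lines I" "infinite (UNIV :: 'f set)"
  shows "infinite l"
proof -
  obtain p v where l: "l = aff_line p v" and "v \<noteq> (\<lambda>_. 0)" using assms(1) by (auto simp: aff_lines_def)
  then obtain i where "v i \<noteq> 0" by auto
  then have "inj (\<lambda>t i. p i + t * v i)" by (auto intro!: injI dest!: fun_cong[of _ _ i])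
  then have "infinite (range (\<lambda>t i. p i + t * v i))" using assms(2) finite_imageD by blast
  moreover have "range (\<lambda>t i. p i + t * v i) = l" by (auto simp: l aff_line_def)
  ultimately show ?thesis by simp
qed

lemma countable_aff_points:
  fixes I :: "nat set"
  assumes "countable (UNIV :: 'f::division_ring set)"
  shows "countable (aff_points I :: (nat \<Rightarrow> 'f) set)"
proof -
  define decode :: "'f list \<Rightarrow> nat \<Rightarrow> 'f" where "decode xs i = (if i < length xs then xs ! i else 0)" for xs i
  have "aff_points I \<subseteq> decode ` lists UNIV"
  proof
    fix x :: "nat \<Rightarrow> 'f" assume "x \<in> aff_points I"
    then obtain n where "\<forall>i\<in>{i. x i \<noteq> 0}. i < n" by (auto simp: aff_points_def finite_nat_set_iff_bounded)
    then have "x = decode (map x [0..<n])" by (auto simp: decode_def fun_eq_iff not_less)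
    then show "x \<in> decode ` lists UNIV" by blast
  qed
  then show ?thesis by (rule countable_subset[OF _ countable_image[OF countable_lists[OF assms]]])
qed

lemma countable_aff_lines:
  fixes I :: "nat set"
  assumes "countable (UNIV :: 'f::division_ring set)"
  shows "countable (aff_lines I :: (nat \<Rightarrow> 'f) set set)"
proof -
  have "countable (aff_points I :: (nat \<Rightarrow> 'f) set)" using assms by (rule countable_aff_points)
  then have "countable (case_prod aff_line ` (aff_points I \<times> (aff_points I :: (nat \<Rightarrow> 'f) set)))"
    by blast
  moreover have "aff_lines I \<subseteq> case_prod aff_line ` (aff_points I \<times> aff_points I)"
    by (auto simp: aff_lines_def)
  ultimately show ?thesis by (rule countable_subset[rotated])
qed

lemma infinite_aff_points:
  assumes "infinite I"
  shows "infinite (aff_points I :: ('i \<Rightarrow> 'f::division_ring) set)"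
proof -
  define e :: "'i \<Rightarrow> 'i \<Rightarrow> 'f" where "e k = (\<lambda>i. if i = k then 1 else 0)" for k
  have "inj e" by (auto intro!: injI simp: e_def fun_eq_iff split: if_splits)
  then have "infinite (e ` I)" using assms by (simp add: finite_image_iff inj_on_subset)
  moreover have "e ` I \<subseteq> aff_points I" by (auto simp: e_def aff_points_def)
  ultimately show ?thesis using finite_subset by blast
qed

lemma infinite_aff_lines:
  assumes "i \<in> I" "j \<in> I" "i \<noteq> j" "infinite (UNIV :: 'f::division_ring set)"
  shows "infinite (aff_lines I :: ('i \<Rightarrow> 'f) set set)"
proof -
  define base :: "'f \<Rightarrow> 'i \<Rightarrow> 'f" where "base s = (\<lambda>k. if k = j then s else 0)" for s
  define dir :: "'i \<Rightarrow> 'f" where "dir = (\<lambda>k. if k = i then 1 else 0)"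
  define par where "par s = aff_line (base s) dir" for s
  have "base s \<in> par s" for s by (auto simp: par_def aff_line_def intro: exI[of _ 0])
  moreover have "x j = s" if "x \<in> par s" for x s
    using that assms(3) by (auto simp: par_def aff_line_def base_def dir_def)
  ultimately have "inj par" by (metis base_def injI)
  moreover have "range par \<subseteq> aff_lines I"
  proof -
    have "base s \<in> aff_points I" "dir \<in> aff_points I" "dir \<noteq> (\<lambda>_. 0)" for s
      using assms(1,2) by (auto simp: aff_points_def base_def dir_def fun_eq_iff)
    then show ?thesis by (auto simp: par_def aff_lines_def)
  qed
  ultimately show ?thesis using assms(4) by (meson finite_imageD finite_subset)
qed

lemma bit_eq_0_or_1: "(t::bit) = 0 \<or> t = 1"
  by (cases t) simp_all

lemma countable_UNIV_bit: "countable (UNIV :: bit set)"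
proof -
  have "(UNIV :: bit set) = {0, 1}" using bit_eq_0_or_1 by blast
  moreover have "countable {0, 1 :: bit}" by simp
  ultimately show ?thesis by (simp only:)
qed

text \<open>The default simp set rewrites arithmetic on \<open>bit\<close> into boolean operations, so the
  computations with \<open>bit\<close> below use \<open>simp only\<close>.\<close>

lemma aff_line_bit:
  fixes v :: "'i \<Rightarrow> bit"
  shows "aff_line p v = {p, \<lambda>i. p i + v i}"
proof -
  have "(\<lambda>i. p i + t * v i) \<in> {p, \<lambda>i. p i + v i}" for t :: bit
    using bit_eq_0_or_1[of t]
    by (elim disjE) (simp_all only: mult_zero_left mult_1_left add_0_right insert_iff simp_thms)
  moreover have "p = (\<lambda>i. p i + 0 * v i)" "(\<lambda>i. p i + v i) = (\<lambda>i. p i + 1 * v i)"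
    by (simp_all only: mult_zero_left mult_1_left add_0_right)
  ultimately show ?thesis unfolding aff_line_def by blast
qed

lemma aff_lines_bit: "aff_lines I = {a. a \<subseteq> (aff_points I :: ('i \<Rightarrow> bit) set) \<and> card a = 2}"
proof (intro set_eqI iffI)
  fix a :: "('i \<Rightarrow> bit) set" assume "a \<in> aff_lines I"
  then obtain p v where a: "a = aff_line p v" and pv: "p \<in> aff_points I" "v \<in> aff_points I" "v \<noteq> (\<lambda>_. 0)"
    by (auto simp: aff_lines_def)
  then have "p \<noteq> (\<lambda>i. p i + v i)" by (metis add_cancel_left_right)
  then have "card a = 2" unfolding a aff_line_bit card_2_iff by blast
  moreover have "a \<subseteq> aff_points I" using a pv aff_line_subset_points by blast
  ultimately show "a \<in> {a. a \<subseteq> aff_points I \<and> card a = 2}" by blast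
next
  fix a :: "('i \<Rightarrow> bit) set" assume "a \<in> {a. a \<subseteq> (aff_points I :: ('i \<Rightarrow> bit) set) \<and> card a = 2}"
  then obtain x y where "a = {x, y}" "x \<noteq> y" "x \<in> aff_points I" "y \<in> aff_points I"
    by (auto simp: card_2_iff)
  moreover have "aff_line x (\<lambda>i. y i - x i) = {x, y}"
  proof -
    have "(\<lambda>i. x i + (y i - x i)) = y" by (simp only: add_diff_eq add_diff_cancel_left')
    then show ?thesis by (simp only: aff_line_bit)
  qed
  moreover have "aff_line x (\<lambda>i. y i - x i) \<in> aff_lines I"
    using \<open>x \<in> aff_points I\<close> \<open>y \<in> aff_points I\<close> \<open>x \<noteq> y\<close> by (rule aff_line_through_in_aff_lines)
  ultimately show "a \<in> aff_lines I" by (simp only:)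
qed

theorem mainTheorem6:
  fixes I' :: "nat set"
  assumes "countable (UNIV :: 'f::division_ring set)"
      and "infinite (UNIV :: 'f set)"
      and "infinite I' \<or> card I' \<ge> 3"
  shows "\<exists>(\<phi> :: (nat \<Rightarrow> bit) set \<Rightarrow> (nat \<Rightarrow> 'f) set) (lam :: (nat \<Rightarrow> bit) \<Rightarrow> (nat \<Rightarrow> 'f)) B'.
     bij_betw \<phi> (aff_lines (UNIV :: nat set)) (aff_lines I') \<and>
     (\<forall>a \<in> aff_lines UNIV. \<forall>b \<in> aff_lines UNIV. a \<inter> b \<noteq> {} \<longrightarrow> \<phi> a \<inter> \<phi> b \<noteq> {}) \<and>
     (\<forall>a \<in> aff_lines UNIV. \<forall>b \<in> aff_lines UNIV. \<forall>p. a \<noteq> b \<and> p \<in> a \<and> p \<in> b \<longrightarrow>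
          \<phi> a \<inter> \<phi> b = {lam p}) \<and>
     inj_on lam (aff_points UNIV) \<and>
     lam ` aff_points UNIV \<noteq> aff_points I' \<and>
     B' \<subseteq> aff_points I' \<and>
     (\<forall>l \<in> aff_lines I'. \<not> (\<exists>x y z. x \<in> B' \<inter> l \<and> y \<in> B' \<inter> l \<and> z \<in> B' \<inter> l \<and>
                                  x \<noteq> y \<and> y \<noteq> z \<and> x \<noteq> z)) \<and>
     (\<forall>l \<in> aff_lines I'. card (B' \<inter> l) = 2) \<and>
     lam ` aff_points UNIV = B'"
proof -
  \<comment> \<open>of the hypothesis on the dimension of \<open>A'\<close>, only the existence of two coordinates is used\<close>
  have "\<exists>T. finite T \<and> card T = 2 \<and> T \<subseteq> I'"
  proof (cases "finite I'")
    case True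
    then have "2 \<le> card I'" using assms(3) by simp
    then show ?thesis by (meson obtain_subset_with_card_n)
  qed (rule infinite_arbitrarily_large)
  then obtain i j where ij: "i \<in> I'" "j \<in> I'" "i \<noteq> j" by (auto simp: card_2_iff)
  show ?thesis
    by (rule embedding_onto_two_set[OF aff_lines_bit countable_aff_points[OF countable_UNIV_bit]
          infinite_aff_points[OF infinite_UNIV_nat] aff_linear_space countable_aff_lines[OF assms(1)]
          infinite_aff_lines[OF ij assms(2)] infinite_aff_line[OF _ assms(2)]])
qed

end
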